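(* Let $T$ be a linear operator in $H$ with $\overline{\operatorname{dom}(T)}=H$. Then for every $\lambda\in W_e(T)$ there exists a sequence of finite-dimensional subspaces $H_n\subset\operatorname{dom}(T)$, $n\in\mathbb N$, such that \[ P_{H_n}\stackrel{s}{\longrightarrow}I\quad\text{and}\quad \operatorname{dist}(\lambda,\sigma(T_{H_n}))\longrightarrow0,\qquad n\to\infty; \] in particular, if $\lambda\in W_e(T)\setminus\sigma(T)$, then $\lambda$ is a spurious eigenvalue of $(T_{H_n})_{n\in\mathbb N}$, i.e. $\lambda\notin\sigma(T)$ and there exist an infinite set $I\subset\mathbb N$ and $\lambda_n\in\sigma(T_{H_n})$, $n\in I$, with $\lambda_n\to\lambda$.
   Context: $H$ is a separable infinite-dimensional complex Hilbert space; $\stackrel{s}{\to}$ denotes strong operator convergence and $x_n\stackrel{w}{\to}x$ weak convergence. For a linear operator $T$ with domain $\operatorname{dom}(T)$, the essential numerical range is $W_e(T)=\{\lambda\in\mathbb C:\exists\,(x_n)\subset\operatorname{dom}(T),\ \|x_n\|=1,\ x_n\stackrel{w}{\to}0,\ \langle Tx_n,x_n\rangle\to\lambda\}$. For a closed subspace $V\subset H$, $P_V$ is the orthogonal projection onto $V$, and if $V\subset\operatorname{dom}(T)$, $T_V:=P_VT|_V$ is the compression of $T$ to $V$, an operator in $V$. $\sigma(\cdot)$ denotes the spectrum. *)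

theory Defs
  imports "HOL-Analysis.Analysis"
begin

text \<open>Model of the separable infinite-dimensional complex Hilbert space H:
  the sequence space l2(N) over the complex numbers, given as a carrier set.\<close>

type_synonym seq = "nat \<Rightarrow> complex"

definition l2 :: "seq set" where
  "l2 = {x. summable (\<lambda>n. (cmod (x n))^2)}"

definition l2inner :: "seq \<Rightarrow> seq \<Rightarrow> complex" where
  "l2inner x y = (\<Sum>n. x n * cnj (y n))"

definition l2norm :: "seq \<Rightarrow> real" where
  "l2norm x = sqrt (\<Sum>n. (cmod (x n))^2)"

definition vadd :: "seq \<Rightarrow> seq \<Rightarrow> seq" where
  "vadd x y = (\<lambda>n. x n + y n)"

definition vdiff :: "seq \<Rightarrow> seq \<Rightarrow> seq" where
  "vdiff x y = (\<lambda>n. x n - y n)"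

definition vscale :: "complex \<Rightarrow> seq \<Rightarrow> seq" where
  "vscale c x = (\<lambda>n. c * x n)"

definition vzero :: seq where
  "vzero = (\<lambda>n. 0)"

definition is_subspace :: "seq set \<Rightarrow> bool" where
  "is_subspace V \<longleftrightarrow> V \<subseteq> l2 \<and> vzero \<in> V \<and>
     (\<forall>x\<in>V. \<forall>y\<in>V. vadd x y \<in> V) \<and> (\<forall>c. \<forall>x\<in>V. vscale c x \<in> V)"

definition dense_in_l2 :: "seq set \<Rightarrow> bool" where
  "dense_in_l2 D \<longleftrightarrow> (\<forall>x\<in>l2. \<forall>e>0. \<exists>y\<in>D. l2norm (vdiff x y) < e)"

definition lin_op :: "seq set \<Rightarrow> (seq \<Rightarrow> seq) \<Rightarrow> bool" where
  "lin_op D T \<longleftrightarrow> is_subspace D \<and> T ` D \<subseteq> l2 \<and>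
     (\<forall>x\<in>D. \<forall>y\<in>D. T (vadd x y) = vadd (T x) (T y)) \<and>
     (\<forall>c. \<forall>x\<in>D. T (vscale c x) = vscale c (T x))"

definition lspan :: "seq set \<Rightarrow> seq set" where
  "lspan B = {x. \<exists>c. x = (\<lambda>n. \<Sum>b\<in>B. c b * b n)}"

definition fin_dim_subspace :: "seq set \<Rightarrow> bool" where
  "fin_dim_subspace V \<longleftrightarrow> (\<exists>B. finite B \<and> B \<subseteq> l2 \<and> V = lspan B)"

definition oproj :: "seq set \<Rightarrow> seq \<Rightarrow> seq" where
  "oproj V x = (THE v. v \<in> V \<and> (\<forall>w\<in>V. l2inner (vdiff x v) w = 0))"

text \<open>Compression T_V = P_V T restricted to V.\<close>
definition compress :: "seq set \<Rightarrow> (seq \<Rightarrow> seq) \<Rightarrow> seq \<Rightarrow> seq" where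
  "compress V T x = oproj V (T x)"

definition op_spectrum :: "seq set \<Rightarrow> seq set \<Rightarrow> (seq \<Rightarrow> seq) \<Rightarrow> complex set" where
  "op_spectrum V D A = {z. \<not> (bij_betw (\<lambda>x. vdiff (A x) (vscale z x)) D V \<and>
      (\<exists>C. \<forall>y\<in>V. l2norm (the_inv_into D (\<lambda>x. vdiff (A x) (vscale z x)) y) \<le> C * l2norm y))}"

definition weak_conv :: "(nat \<Rightarrow> seq) \<Rightarrow> seq \<Rightarrow> bool" where
  "weak_conv x a \<longleftrightarrow> (\<forall>y\<in>l2. (\<lambda>n. l2inner (x n) y) \<longlonglongrightarrow> l2inner a y)"

definition strong_to_id :: "(nat \<Rightarrow> seq \<Rightarrow> seq) \<Rightarrow> bool" where
  "strong_to_id P \<longleftrightarrow> (\<forall>x\<in>l2. (\<lambda>n. l2norm (vdiff (P n x) x)) \<longlonglongrightarrow> 0)"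

definition ess_num_range :: "seq set \<Rightarrow> (seq \<Rightarrow> seq) \<Rightarrow> complex set" where
  "ess_num_range D T = {z. \<exists>x. (\<forall>n. x n \<in> D \<and> l2norm (x n) = 1) \<and> weak_conv x vzero \<and>
      (\<lambda>n. l2inner (T (x n)) (x n)) \<longlonglongrightarrow> z}"

definition spurious_eig :: "seq set \<Rightarrow> (seq \<Rightarrow> seq) \<Rightarrow> (nat \<Rightarrow> seq set) \<Rightarrow> complex \<Rightarrow> bool" where
  "spurious_eig D T Hn z \<longleftrightarrow> z \<notin> op_spectrum l2 D T \<and>
     (\<exists>I \<mu>. infinite I \<and> (\<forall>n\<in>I. \<mu> n \<in> op_spectrum (Hn n) (Hn n) (compress (Hn n) T)) \<and>
        (\<forall>e>0. \<exists>N. \<forall>n\<in>I. n \<ge> N \<longrightarrow> dist (\<mu> n) z < e))"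

end

theory Submission
  imports Defs
begin

text \<open>If \<open>u \<in> dom T\<close> is a unit vector orthogonal to a finite set \<open>B \<subseteq> dom T\<close> and to
  \<open>T ` B\<close>, then \<open>u\<close> is orthogonal to the range of \<open>T\<^sub>H - \<langle>T u, u\<rangle>\<close> for
  \<open>H = span (B \<union> {u})\<close>, so \<open>\<langle>T u, u\<rangle>\<close> lies in the spectrum of the compression \<open>T\<^sub>H\<close>.
  For \<open>\<lambda> \<in> W\<^sub>e(T)\<close>, witnessed by a weakly null unit sequence \<open>x\<^sub>n\<close> with
  \<open>\<langle>T x\<^sub>n, x\<^sub>n\<rangle> \<rightarrow> \<lambda>\<close>, and any finite \<open>E \<subseteq> dom T\<close>, such \<open>u\<close> and \<open>B\<close> exist with
  \<open>\<langle>T u, u\<rangle>\<close> close to \<open>\<lambda>\<close> and \<open>B\<close> close to \<open>E\<close>. If the cross terms \<open>\<langle>T x\<^sub>n, x\<^sub>m\<rangle>\<close>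
  stay bounded, subtracting vanishing multiples of late terms makes the sequence eventually orthogonal
  to \<open>E \<union> T ` E\<close>; then \<open>B = E\<close> and \<open>u\<close> is a normalised late term. Otherwise some
  \<open>\<langle>T x\<^sub>n, x\<^sub>m\<rangle>\<close> is large, \<open>u = x\<^sub>m\<close>, and each \<open>e \<in> E\<close> is corrected by a small
  combination of \<open>x\<^sub>m\<close> and \<open>x\<^sub>n\<close>. Letting \<open>E\<close> approximate the first \<open>k\<close> unit vectors
  gives spaces \<open>H\<^sub>k\<close> with \<open>P\<^sub>H\<^sub>k \<rightarrow> I\<close> strongly and spectral points of the
  compressions converging to \<open>\<lambda>\<close>.\<close>

section \<open>The inner product of \<open>l2\<close>\<close>

lemma vzero_in_l2 [simp]: "vzero \<in> l2"
  by (simp add: l2_def vzero_def)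

lemma vscale_in_l2 [simp]:
  assumes "x \<in> l2"
  shows "vscale c x \<in> l2"
proof -
  have "summable (\<lambda>n. (cmod c)^2 * (cmod (x n))^2)"
    using assms by (intro summable_mult) (simp add: l2_def)
  then show ?thesis
    by (simp add: l2_def vscale_def norm_mult power_mult_distrib)
qed

lemma vadd_in_l2 [simp]:
  assumes "x \<in> l2" "y \<in> l2"
  shows "vadd x y \<in> l2"
proof -
  have bound: "(cmod (a + b))^2 \<le> 2 * (cmod a)^2 + 2 * (cmod b)^2" for a b :: complex
  proof -
    have "(cmod (a + b))^2 \<le> (cmod a + cmod b)^2"
      by (simp add: norm_triangle_ineq power_mono)
    also have "\<dots> \<le> 2 * (cmod a)^2 + 2 * (cmod b)^2"
      using sum_squares_bound[of "cmod a" "cmod b"] by (simp add: power2_sum)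
    finally show ?thesis .
  qed
  have "summable (\<lambda>n. 2 * (cmod (x n))^2 + 2 * (cmod (y n))^2)"
    using assms by (intro summable_add summable_mult) (auto simp: l2_def)
  then show ?thesis
    unfolding l2_def vadd_def mem_Collect_eq
    by (rule summable_comparison_test'[where N=0]) (simp add: bound)
qed

lemma vdiff_eq_vadd_vscale: "vdiff x y = vadd x (vscale (-1) y)"
  by (simp add: vdiff_def vadd_def vscale_def)

lemma vdiff_in_l2 [simp]: "x \<in> l2 \<Longrightarrow> y \<in> l2 \<Longrightarrow> vdiff x y \<in> l2"
  by (simp add: vdiff_eq_vadd_vscale)

lemma summable_cmod_mult_l2:
  assumes "x \<in> l2" "y \<in> l2"
  shows "summable (\<lambda>n. cmod (x n) * cmod (y n))"
proof -
  have "summable (\<lambda>n. (cmod (x n))^2 + (cmod (y n))^2)"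
    using assms by (intro summable_add) (auto simp: l2_def)
  moreover have "norm (cmod (x n) * cmod (y n)) \<le> (cmod (x n))^2 + (cmod (y n))^2" for n
  proof -
    have "0 \<le> cmod (x n) * cmod (y n)"
      by simp
    then have "cmod (x n) * cmod (y n) \<le> (cmod (x n))^2 + (cmod (y n))^2"
      using sum_squares_bound[of "cmod (x n)" "cmod (y n)"] by linarith
    then show ?thesis
      by simp
  qed
  ultimately show ?thesis
    by (rule summable_comparison_test'[where N=0])
qed

lemma summable_l2inner:
  assumes "x \<in> l2" "y \<in> l2"
  shows "summable (\<lambda>n. x n * cnj (y n))"
  by (rule summable_norm_cancel) (use summable_cmod_mult_l2[OF assms] in \<open>simp add: norm_mult\<close>)

lemma l2inner_vzero_left [simp]: "l2inner vzero x = 0"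
  and l2inner_vzero_right [simp]: "l2inner x vzero = 0"
  by (simp_all add: l2inner_def vzero_def)

lemma l2inner_vadd_left:
  assumes "x \<in> l2" "y \<in> l2" "w \<in> l2"
  shows "l2inner (vadd x y) w = l2inner x w + l2inner y w"
  unfolding l2inner_def vadd_def
  using suminf_add[OF summable_l2inner summable_l2inner] assms by (simp add: algebra_simps)

lemma l2inner_vscale_left:
  assumes "x \<in> l2" "w \<in> l2"
  shows "l2inner (vscale c x) w = c * l2inner x w"
  unfolding l2inner_def vscale_def
  using suminf_mult[OF summable_l2inner[OF assms], of c] by (simp add: mult.assoc)

lemma l2inner_commute:
  assumes "x \<in> l2" "y \<in> l2"
  shows "l2inner y x = cnj (l2inner x y)"
proof -
  have "(\<lambda>n. cnj (x n * cnj (y n))) sums cnj (l2inner x y)"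
    using summable_sums[OF summable_l2inner[OF assms]] unfolding l2inner_def by (simp only: sums_cnj)
  then show ?thesis
    unfolding l2inner_def by (simp add: sums_iff mult.commute)
qed

lemma l2inner_vadd_right:
  assumes "x \<in> l2" "y \<in> l2" "w \<in> l2"
  shows "l2inner w (vadd x y) = l2inner w x + l2inner w y"
  using assms by (simp add: l2inner_commute[of _ w] l2inner_vadd_left)

lemma l2inner_vscale_right:
  assumes "x \<in> l2" "w \<in> l2"
  shows "l2inner w (vscale c x) = cnj c * l2inner w x"
  using assms by (simp add: l2inner_commute[of _ w] l2inner_vscale_left)

lemma l2inner_vdiff_left:
  assumes "x \<in> l2" "y \<in> l2" "w \<in> l2"
  shows "l2inner (vdiff x y) w = l2inner x w - l2inner y w"
  using assms by (simp add: vdiff_eq_vadd_vscale l2inner_vadd_left l2inner_vscale_left)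

lemma l2inner_vdiff_right:
  assumes "x \<in> l2" "y \<in> l2" "w \<in> l2"
  shows "l2inner w (vdiff x y) = l2inner w x - l2inner w y"
  using assms by (simp add: vdiff_eq_vadd_vscale l2inner_vadd_right l2inner_vscale_right)

lemmas l2inner_linear =
  l2inner_vadd_left l2inner_vadd_right l2inner_vscale_left l2inner_vscale_right
  l2inner_vdiff_left l2inner_vdiff_right

lemma l2norm_nonneg: "x \<in> l2 \<Longrightarrow> 0 \<le> l2norm x"
  unfolding l2norm_def by (intro real_sqrt_ge_zero suminf_nonneg) (auto simp: l2_def)

lemma l2norm_sq:
  assumes "x \<in> l2"
  shows "(l2norm x)^2 = (\<Sum>n. (cmod (x n))^2)"
proof -
  have "0 \<le> (\<Sum>n. (cmod (x n))^2)"
    using assms by (intro suminf_nonneg) (auto simp: l2_def)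
  then show ?thesis
    by (simp add: l2norm_def)
qed

lemma l2inner_self:
  assumes "x \<in> l2"
  shows "l2inner x x = of_real ((l2norm x)^2)"
proof -
  have "l2inner x x = (\<Sum>n. complex_of_real ((cmod (x n))^2))"
    unfolding l2inner_def by (simp only: complex_norm_square)
  also have "\<dots> = complex_of_real (\<Sum>n. (cmod (x n))^2)"
    using assms by (simp add: suminf_of_real l2_def)
  finally show ?thesis
    by (simp add: l2norm_sq[OF assms])
qed

lemma l2norm_eq_1_iff:
  assumes "x \<in> l2"
  shows "l2norm x = 1 \<longleftrightarrow> l2inner x x = 1"
proof -
  have "l2inner x x = 1 \<longleftrightarrow> (l2norm x)^2 = 1"
    using l2inner_self[OF assms] by (metis of_real_eq_1_iff)
  also have "\<dots> \<longleftrightarrow> l2norm x = 1"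
    using l2norm_nonneg[OF assms] by (simp add: power2_eq_1_iff)
  finally show ?thesis
    by simp
qed

lemma l2inner_self_eq_0D:
  assumes "x \<in> l2" "l2inner x x = 0"
  shows "x = vzero"
proof -
  have "(\<Sum>n. (cmod (x n))^2) = 0"
    using assms by (simp add: l2inner_self l2norm_sq[symmetric])
  then have "\<forall>n. (cmod (x n))^2 = 0"
    using assms(1) by (simp add: suminf_eq_zero_iff l2_def)
  then show ?thesis
    by (auto simp: vzero_def)
qed

lemma l2inner_Cauchy_Schwarz:
  assumes "x \<in> l2" "y \<in> l2"
  shows "cmod (l2inner x y) \<le> l2norm x * l2norm y"
proof -
  let ?A = "\<Sum>n. (cmod (x n))^2" and ?B = "\<Sum>n. (cmod (y n))^2"
  have sA: "summable (\<lambda>n. (cmod (x n))^2)" and sB: "summable (\<lambda>n. (cmod (y n))^2)"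
    using assms by (auto simp: l2_def)
  have partial_sums: "(\<Sum>n<N. cmod (x n) * cmod (y n)) \<le> sqrt (?A * ?B)" for N
  proof (rule real_le_rsqrt)
    have "(\<Sum>n<N. cmod (x n) * cmod (y n))^2 \<le> (\<Sum>n<N. (cmod (x n))^2) * (\<Sum>n<N. (cmod (y n))^2)"
      by (rule Cauchy_Schwarz_ineq_sum)
    also have "\<dots> \<le> ?A * ?B"
      using sA sB by (intro mult_mono sum_le_suminf suminf_nonneg sum_nonneg) auto
    finally show "(\<Sum>n<N. cmod (x n) * cmod (y n))^2 \<le> ?A * ?B" .
  qed
  have "cmod (l2inner x y) \<le> (\<Sum>n. cmod (x n) * cmod (y n))"
    unfolding l2inner_def
    using summable_norm[of "\<lambda>n. x n * cnj (y n)"] summable_cmod_mult_l2[OF assms]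
    by (simp add: norm_mult)
  also have "\<dots> \<le> sqrt (?A * ?B)"
    by (rule suminf_le_const[OF summable_cmod_mult_l2[OF assms] partial_sums])
  also have "\<dots> = l2norm x * l2norm y"
    by (simp add: l2norm_def real_sqrt_mult)
  finally show ?thesis .
qed

lemma l2norm_vadd_sq:
  assumes "x \<in> l2" "y \<in> l2"
  shows "(l2norm (vadd x y))^2 = (l2norm x)^2 + (l2norm y)^2 + 2 * Re (l2inner x y)"
proof -
  have "l2inner (vadd x y) (vadd x y) = l2inner x x + l2inner y y + (l2inner x y + cnj (l2inner x y))"
    using assms by (simp add: l2inner_vadd_left l2inner_vadd_right l2inner_commute[of x y])
  then have "Re (l2inner (vadd x y) (vadd x y)) = Re (l2inner x x) + Re (l2inner y y) + 2 * Re (l2inner x y)"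
    by simp
  then show ?thesis
    using assms by (simp add: l2inner_self)
qed

lemma l2norm_triangle:
  assumes "x \<in> l2" "y \<in> l2"
  shows "l2norm (vadd x y) \<le> l2norm x + l2norm y"
proof -
  have "Re (l2inner x y) \<le> l2norm x * l2norm y"
    using l2inner_Cauchy_Schwarz[OF assms] complex_Re_le_cmod order_trans by blast
  then have "(l2norm (vadd x y))^2 \<le> (l2norm x + l2norm y)^2"
    using l2norm_vadd_sq[OF assms] by (simp add: power2_eq_square algebra_simps)
  then show ?thesis
    using assms l2norm_nonneg power2_le_imp_le add_nonneg_nonneg by blast
qed

lemma l2norm_vscale:
  assumes "x \<in> l2"
  shows "l2norm (vscale c x) = cmod c * l2norm x"
proof -
  have "(\<Sum>n. (cmod (vscale c x n))^2) = (\<Sum>n. (cmod c)^2 * (cmod (x n))^2)"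
    by (simp add: vscale_def norm_mult power_mult_distrib)
  also have "\<dots> = (cmod c)^2 * (\<Sum>n. (cmod (x n))^2)"
    using assms by (simp add: suminf_mult l2_def)
  finally show ?thesis
    by (simp add: l2norm_def real_sqrt_mult)
qed

lemma l2norm_vdiff_commute:
  assumes "x \<in> l2" "y \<in> l2"
  shows "l2norm (vdiff x y) = l2norm (vdiff y x)"
proof -
  have "vdiff x y = vscale (-1) (vdiff y x)"
    by (simp add: vdiff_def vscale_def)
  then show ?thesis
    using assms by (simp add: l2norm_vscale)
qed

lemma l2norm_vdiff_triangle:
  assumes "x \<in> l2" "y \<in> l2" "w \<in> l2"
  shows "l2norm (vdiff x w) \<le> l2norm (vdiff x y) + l2norm (vdiff y w)"
proof -
  have "vdiff x w = vadd (vdiff x y) (vdiff y w)"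
    by (simp add: vdiff_def vadd_def)
  then show ?thesis
    using assms by (simp add: l2norm_triangle)
qed

section \<open>Finite spans and orthogonal projections\<close>

definition vsum :: "'a set \<Rightarrow> ('a \<Rightarrow> complex) \<Rightarrow> ('a \<Rightarrow> seq) \<Rightarrow> seq" where
  "vsum J c g = (\<lambda>n. \<Sum>j\<in>J. c j * g j n)"

lemma vsum_empty [simp]: "vsum {} c g = vzero"
  by (simp add: vsum_def vzero_def)

lemma vsum_insert:
  "finite J \<Longrightarrow> a \<notin> J \<Longrightarrow> vsum (insert a J) c g = vadd (vscale (c a) (g a)) (vsum J c g)"
  by (simp add: vsum_def vadd_def vscale_def)

lemma lspan_eq_vsum: "lspan B = {x. \<exists>c. x = vsum B c (\<lambda>b. b)}"
  by (simp add: lspan_def vsum_def)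

lemma vsum_in_l2:
  "finite J \<Longrightarrow> g ` J \<subseteq> l2 \<Longrightarrow> vsum J c g \<in> l2"
  by (induction J rule: finite_induct) (simp_all add: vsum_insert)

lemma l2inner_vsum_left:
  assumes "finite J" "g ` J \<subseteq> l2" "w \<in> l2"
  shows "l2inner (vsum J c g) w = (\<Sum>j\<in>J. c j * l2inner (g j) w)"
  using assms
  by (induction J rule: finite_induct) (simp_all add: vsum_insert vsum_in_l2 l2inner_linear)

lemma l2inner_vsum_right:
  assumes "finite J" "g ` J \<subseteq> l2" "w \<in> l2"
  shows "l2inner w (vsum J c g) = (\<Sum>j\<in>J. cnj (c j) * l2inner w (g j))"
  using assms
  by (induction J rule: finite_induct) (simp_all add: vsum_insert vsum_in_l2 l2inner_linear)

lemma l2norm_vsum_le: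
  assumes "finite J" "g ` J \<subseteq> l2"
  shows "l2norm (vsum J c g) \<le> (\<Sum>j\<in>J. cmod (c j) * l2norm (g j))"
  using assms
proof (induction J rule: finite_induct)
  case empty
  then show ?case
    by (simp add: l2norm_def vzero_def)
next
  case (insert a J)
  then have "l2norm (vsum (insert a J) c g) \<le> l2norm (vscale (c a) (g a)) + l2norm (vsum J c g)"
    by (simp add: vsum_insert vsum_in_l2 l2norm_triangle)
  with insert show ?case
    by (simp add: l2norm_vscale)
qed

lemma is_subspaceD:
  assumes "is_subspace V"
  shows is_subspace_subset_l2: "V \<subseteq> l2"
    and is_subspace_vzero: "vzero \<in> V"
    and is_subspace_vadd: "x \<in> V \<Longrightarrow> y \<in> V \<Longrightarrow> vadd x y \<in> V"
    and is_subspace_vscale: "x \<in> V \<Longrightarrow> vscale c x \<in> V"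
  using assms by (auto simp: is_subspace_def)

lemma is_subspace_vdiff: "is_subspace V \<Longrightarrow> x \<in> V \<Longrightarrow> y \<in> V \<Longrightarrow> vdiff x y \<in> V"
  by (simp add: is_subspace_def vdiff_eq_vadd_vscale)

lemma vsum_in_subspace:
  assumes "is_subspace V" "finite J" "g ` J \<subseteq> V"
  shows "vsum J c g \<in> V"
  using assms(2,3)
  by (induction J rule: finite_induct) (use assms(1) in \<open>simp_all add: vsum_insert is_subspace_def\<close>)

lemma lspan_subset_subspace:
  "is_subspace V \<Longrightarrow> finite B \<Longrightarrow> B \<subseteq> V \<Longrightarrow> lspan B \<subseteq> V"
  by (auto simp: lspan_eq_vsum intro: vsum_in_subspace)

lemma is_subspace_lspan:
  assumes "finite B" "B \<subseteq> l2"
  shows "is_subspace (lspan B)"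
  unfolding is_subspace_def
proof (intro conjI ballI allI)
  show "lspan B \<subseteq> l2"
    using assms by (auto simp: lspan_eq_vsum intro: vsum_in_l2)
  show "vzero \<in> lspan B"
    by (auto simp: lspan_eq_vsum vsum_def vzero_def intro: exI[of _ "\<lambda>_. 0"])
  show "vadd x y \<in> lspan B" if "x \<in> lspan B" "y \<in> lspan B" for x y
    using that by (auto simp: lspan_eq_vsum vsum_def vadd_def sum.distrib distrib_right
        intro: exI[of _ "\<lambda>b. _ b + _ b"])
  show "vscale a x \<in> lspan B" if "x \<in> lspan B" for a x
    using that by (auto simp: lspan_eq_vsum vsum_def vscale_def sum_distrib_left mult.assoc
        intro: exI[of _ "\<lambda>b. a * _ b"])
qed

lemma generator_in_lspan:
  assumes "finite B" "b \<in> B"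
  shows "b \<in> lspan B"
proof -
  have "b = vsum B (\<lambda>b'. if b' = b then 1 else 0) (\<lambda>b. b)"
    using assms by (simp add: vsum_def if_distrib[where f="\<lambda>t. t * _"] sum.delta cong: if_cong)
  then show ?thesis
    by (auto simp: lspan_eq_vsum)
qed

lemma lspan_mono:
  assumes "finite C" "C \<subseteq> l2" "B \<subseteq> C"
  shows "lspan B \<subseteq> lspan C"
  using assms finite_subset[OF assms(3,1)]
  by (intro lspan_subset_subspace is_subspace_lspan) (auto intro: generator_in_lspan)

lemma orth_lspan:
  assumes "finite B" "B \<subseteq> l2" "y \<in> l2" "\<forall>b\<in>B. l2inner y b = 0" "w \<in> lspan B"
  shows "l2inner y w = 0"
  using assms by (auto simp: lspan_eq_vsum l2inner_vsum_right)

definition is_orth_proj :: "seq set \<Rightarrow> seq \<Rightarrow> seq \<Rightarrow> bool" where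
  "is_orth_proj V x p \<longleftrightarrow> p \<in> V \<and> (\<forall>w\<in>V. l2inner (vdiff x p) w = 0)"

lemma is_orth_proj_unique:
  assumes V: "is_subspace V" and x: "x \<in> l2"
    and p: "is_orth_proj V x p" and q: "is_orth_proj V x q"
  shows "p = q"
proof -
  have "p \<in> l2" "q \<in> l2" "vdiff p q \<in> V"
    using V p q by (auto simp: is_orth_proj_def is_subspace_def intro: is_subspace_vdiff)
  moreover have "vdiff p q = vdiff (vdiff x q) (vdiff x p)"
    by (simp add: vdiff_def)
  ultimately have "l2inner (vdiff p q) (vdiff p q)
      = l2inner (vdiff x q) (vdiff p q) - l2inner (vdiff x p) (vdiff p q)"
    using x by (metis l2inner_vdiff_left vdiff_in_l2)
  also have "\<dots> = 0"
    using p q \<open>vdiff p q \<in> V\<close> by (simp add: is_orth_proj_def)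
  finally have "vdiff p q = vzero"
    using \<open>p \<in> l2\<close> \<open>q \<in> l2\<close> by (intro l2inner_self_eq_0D) simp_all
  then show ?thesis
    by (simp add: vdiff_def vzero_def fun_eq_iff)
qed

lemma oproj_eqI:
  assumes "is_subspace V" "x \<in> l2" "is_orth_proj V x p"
  shows "oproj V x = p"
proof -
  have "(THE q. is_orth_proj V x q) = p"
    using assms is_orth_proj_unique by blast
  then show ?thesis
    by (simp only: oproj_def is_orth_proj_def)
qed

lemma is_orth_proj_lspan_iff:
  assumes B: "finite B" "B \<subseteq> l2" and x: "x \<in> l2"
  shows "is_orth_proj (lspan B) x p \<longleftrightarrow> p \<in> lspan B \<and> (\<forall>b\<in>B. l2inner (vdiff x p) b = 0)"
proof
  assume "is_orth_proj (lspan B) x p"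
  then show "p \<in> lspan B \<and> (\<forall>b\<in>B. l2inner (vdiff x p) b = 0)"
    using B(1) by (simp add: is_orth_proj_def generator_in_lspan)
next
  assume p: "p \<in> lspan B \<and> (\<forall>b\<in>B. l2inner (vdiff x p) b = 0)"
  then have "vdiff x p \<in> l2"
    using x is_subspace_subset_l2[OF is_subspace_lspan[OF B]] by auto
  with p B show "is_orth_proj (lspan B) x p"
    by (auto simp: is_orth_proj_def intro: orth_lspan)
qed

lemma orth_proj_correction:
  assumes V: "is_subspace V" and x: "x \<in> l2" and r: "r \<in> l2" "\<forall>w\<in>V. l2inner r w = 0"
    and p: "is_orth_proj V x p"
  defines "q \<equiv> vadd p (vscale (l2inner (vdiff x p) r / l2inner r r) r)"
  shows "\<forall>w\<in>V. l2inner (vdiff x q) w = 0" and "l2inner (vdiff x q) r = 0"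
proof -
  define t where "t = l2inner (vdiff x p) r / l2inner r r"
  have p_l2: "p \<in> l2"
    using p is_subspace_subset_l2[OF V] by (auto simp: is_orth_proj_def)
  have residual: "l2inner (vdiff x q) w = l2inner (vdiff x p) w - t * l2inner r w" if "w \<in> l2" for w
  proof -
    have "vdiff x q = vdiff (vdiff x p) (vscale t r)"
      by (simp add: q_def t_def vdiff_def vadd_def vscale_def algebra_simps)
    then show ?thesis
      using x p_l2 r that by (simp only: l2inner_vdiff_left l2inner_vscale_left vdiff_in_l2 vscale_in_l2)
  qed
  show "\<forall>w\<in>V. l2inner (vdiff x q) w = 0"
  proof
    fix w assume "w \<in> V"
    then show "l2inner (vdiff x q) w = 0"
      using residual[of w] p r is_subspace_subset_l2[OF V] unfolding is_orth_proj_def by auto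
  qed
  show "l2inner (vdiff x q) r = 0"
  proof (cases "l2inner r r = 0")
    case True
    with r(1) have "r = vzero"
      by (rule l2inner_self_eq_0D)
    then show ?thesis
      by simp
  next
    case False
    then show ?thesis
      using residual[OF r(1)] by (simp add: t_def)
  qed
qed

text \<open>Gram--Schmidt step: \<open>r = a - P a\<close> is orthogonal to \<open>lspan B\<close>, and adding to \<open>P x\<close>
  the component of \<open>x - P x\<close> along \<open>r\<close> gives the projection onto \<open>lspan (insert a B)\<close>.\<close>

lemma is_orth_proj_insert:
  assumes B: "finite B" "insert a B \<subseteq> l2" and x: "x \<in> l2"
    and pa: "is_orth_proj (lspan B) a pa" and p: "is_orth_proj (lspan B) x p"
  shows "\<exists>q. is_orth_proj (lspan (insert a B)) x q"
proof -
  have S: "is_subspace (lspan B)" "is_subspace (lspan (insert a B))"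
    using B by (simp_all add: is_subspace_lspan)
  have sub: "lspan B \<subseteq> lspan (insert a B)"
    using B by (intro lspan_mono) auto
  have pa_span: "pa \<in> lspan B" and p_span: "p \<in> lspan B"
    using pa p by (simp_all add: is_orth_proj_def)
  have pa_l2: "pa \<in> l2"
    using pa_span is_subspace_subset_l2[OF S(1)] by auto
  define r where "r = vdiff a pa"
  define q where "q = vadd p (vscale (l2inner (vdiff x p) r / l2inner r r) r)"
  have r: "r \<in> l2" "\<forall>w\<in>lspan B. l2inner r w = 0"
    using B pa_l2 pa by (simp_all add: r_def is_orth_proj_def)
  note orth = orth_proj_correction[OF S(1) x r p, folded q_def]
  have r_span: "r \<in> lspan (insert a B)"
    unfolding r_def using S(2) B pa_span sub generator_in_lspan[of "insert a B" a]
    by (intro is_subspace_vdiff) auto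
  have q_span: "q \<in> lspan (insert a B)"
    unfolding q_def using r_span p_span sub by (intro is_subspace_vadd is_subspace_vscale S(2)) auto
  have "vdiff x q \<in> l2"
    using x q_span is_subspace_subset_l2[OF S(2)] by auto
  moreover have "a = vadd pa r"
    by (simp add: r_def vadd_def vdiff_def)
  ultimately have "l2inner (vdiff x q) a = 0"
    using l2inner_vadd_right[OF pa_l2 r(1)] orth pa_span by simp
  then have "is_orth_proj (lspan (insert a B)) x q"
    using B x q_span orth(1) generator_in_lspan[OF B(1)] by (simp add: is_orth_proj_lspan_iff)
  then show ?thesis
    by blast
qed

lemma ex_orth_proj_lspan:
  assumes "finite B" "B \<subseteq> l2" "x \<in> l2"
  shows "\<exists>p. is_orth_proj (lspan B) x p"
  using assms
proof (induction B arbitrary: x rule: finite_induct)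
  case empty
  have "lspan {} = {vzero}"
    by (simp add: lspan_eq_vsum)
  then have "is_orth_proj (lspan {}) x vzero"
    by (simp add: is_orth_proj_def)
  then show ?case
    by blast
next
  case (insert a B)
  then obtain pa p where "is_orth_proj (lspan B) a pa" "is_orth_proj (lspan B) x p"
    by (metis insert_subset)
  with insert.hyps insert.prems show ?case
    by (intro is_orth_proj_insert) simp_all
qed

lemma is_orth_proj_oproj_lspan:
  assumes "finite B" "B \<subseteq> l2" "x \<in> l2"
  shows "is_orth_proj (lspan B) x (oproj (lspan B) x)"
proof -
  obtain p where p: "is_orth_proj (lspan B) x p"
    using ex_orth_proj_lspan[OF assms] by blast
  then have "oproj (lspan B) x = p"
    by (rule oproj_eqI[OF is_subspace_lspan[OF assms(1,2)] assms(3)])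
  with p show ?thesis
    by simp
qed

lemma is_orth_proj_best_approx:
  assumes V: "is_subspace V" and x: "x \<in> l2" and p: "is_orth_proj V x p" and h: "h \<in> V"
  shows "l2norm (vdiff x p) \<le> l2norm (vdiff x h)"
proof -
  have p_V: "p \<in> V"
    using p by (simp add: is_orth_proj_def)
  have ph: "vdiff p h \<in> V"
    using V p_V h by (rule is_subspace_vdiff)
  then have orth: "l2inner (vdiff x p) (vdiff p h) = 0"
    using p by (simp add: is_orth_proj_def)
  have l2: "p \<in> l2" "h \<in> l2"
    using p_V h is_subspace_subset_l2[OF V] by auto
  have "vdiff x h = vadd (vdiff x p) (vdiff p h)"
    by (simp add: vdiff_def vadd_def)
  then have "(l2norm (vdiff x h))^2 = (l2norm (vdiff x p))^2 + (l2norm (vdiff p h))^2"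
    using l2norm_vadd_sq[of "vdiff x p" "vdiff p h"] orth l2 x by simp
  then have "(l2norm (vdiff x p))^2 \<le> (l2norm (vdiff x h))^2"
    by simp
  then show ?thesis
    by (rule power2_le_imp_le) (simp add: l2norm_nonneg x l2)
qed

section \<open>Compressions\<close>

lemma lin_opD:
  assumes "lin_op D T"
  shows lin_op_subspace: "is_subspace D"
    and lin_op_in_l2: "x \<in> D \<Longrightarrow> T x \<in> l2"
    and lin_op_vadd: "x \<in> D \<Longrightarrow> y \<in> D \<Longrightarrow> T (vadd x y) = vadd (T x) (T y)"
    and lin_op_vscale: "x \<in> D \<Longrightarrow> T (vscale c x) = vscale c (T x)"
  using assms by (auto simp: lin_op_def)

lemma lin_op_vzero:
  assumes "lin_op D T"
  shows "T vzero = vzero"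
proof -
  have "vzero = vscale 0 vzero"
    by (simp add: vscale_def vzero_def)
  then have "T vzero = vscale 0 (T vzero)"
    using assms by (metis lin_op_vscale is_subspace_vzero lin_op_subspace)
  then show ?thesis
    by (simp add: vscale_def vzero_def)
qed

lemma lin_op_vdiff:
  assumes "lin_op D T" "x \<in> D" "y \<in> D"
  shows "T (vdiff x y) = vdiff (T x) (T y)"
  using assms
  by (simp add: vdiff_eq_vadd_vscale lin_op_vadd lin_op_vscale is_subspace_vscale lin_op_subspace)

lemma lin_op_vsum:
  assumes T: "lin_op D T" and J: "finite J" "g ` J \<subseteq> D"
  shows "T (vsum J c g) = vsum J c (\<lambda>j. T (g j))"
  using J
proof (induction J rule: finite_induct)
  case empty
  then show ?case
    using lin_op_vzero[OF T] by simp
next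
  case (insert a J)
  have "vsum J c g \<in> D"
    using insert lin_op_subspace[OF T] by (intro vsum_in_subspace) auto
  with insert T show ?case
    by (simp add: vsum_insert lin_op_vadd lin_op_vscale is_subspace_vscale lin_op_subspace)
qed

lemma mem_op_spectrum_if_orth_range:
  assumes "u \<in> V" "l2inner u u \<noteq> 0"
    and "\<forall>h\<in>D. l2inner (vdiff (A h) (vscale z h)) u = 0"
  shows "z \<in> op_spectrum V D A"
proof -
  have "u \<notin> (\<lambda>h. vdiff (A h) (vscale z h)) ` D"
    using assms(2,3) by auto
  then show ?thesis
    using assms(1) by (auto simp: op_spectrum_def bij_betw_def)
qed

lemma l2inner_oproj_lspan:
  assumes "finite B" "B \<subseteq> l2" "y \<in> l2" "w \<in> lspan B"
  shows "l2inner (oproj (lspan B) y) w = l2inner y w"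
proof -
  have p: "is_orth_proj (lspan B) y (oproj (lspan B) y)"
    using assms(1-3) by (rule is_orth_proj_oproj_lspan)
  then have "oproj (lspan B) y \<in> l2"
    using is_subspace_subset_l2[OF is_subspace_lspan[OF assms(1,2)]] by (auto simp: is_orth_proj_def)
  moreover have "l2inner (vdiff y (oproj (lspan B) y)) w = 0"
    using p assms(4) by (simp add: is_orth_proj_def)
  moreover have "w \<in> l2"
    using assms(4) is_subspace_subset_l2[OF is_subspace_lspan[OF assms(1,2)]] by auto
  ultimately show ?thesis
    using assms(3) by (simp add: l2inner_vdiff_left)
qed

lemma l2inner_lin_op_lspan_insert:
  assumes T: "lin_op D T" and B: "finite B" "B \<subseteq> D"
    and u: "u \<in> D" "l2inner u u = 1"
    and orth: "\<forall>b\<in>B. l2inner b u = 0 \<and> l2inner (T b) u = 0"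
    and h: "h \<in> lspan (insert u B)"
  shows "l2inner (T h) u = l2inner h u * l2inner (T u) u"
proof -
  obtain c where c: "h = vsum (insert u B) c (\<lambda>b. b)"
    using h by (auto simp: lspan_eq_vsum)
  have D_l2: "D \<subseteq> l2"
    using is_subspace_subset_l2[OF lin_op_subspace[OF T]] .
  have l2: "u \<in> l2" "insert u B \<subseteq> l2" "T ` insert u B \<subseteq> l2"
    using B u D_l2 lin_op_in_l2[OF T] by auto
  have u_notin: "u \<notin> B"
    using orth u(2) by auto
  have "l2inner (T h) u = (\<Sum>b\<in>insert u B. c b * l2inner (T b) u)"
    using T B u l2 by (simp add: c lin_op_vsum l2inner_vsum_left)
  also have "\<dots> = c u * l2inner (T u) u"
    using B orth u_notin by simp
  moreover have "l2inner h u = (\<Sum>b\<in>insert u B. c b * l2inner b u)"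
    using B l2 by (simp add: c l2inner_vsum_left)
  moreover have "\<dots> = c u"
    using B orth u_notin u(2) by simp
  ultimately show ?thesis
    by simp
qed

text \<open>Here \<open>u\<close> is an eigenvector of the adjoint of \<open>T\<^sub>H\<close>, not of \<open>T\<^sub>H\<close> itself.\<close>

lemma l2inner_mem_spectrum_compress:
  assumes T: "lin_op D T" and B: "finite B" "B \<subseteq> D"
    and u: "u \<in> D" "l2inner u u = 1"
    and orth: "\<forall>b\<in>B. l2inner b u = 0 \<and> l2inner (T b) u = 0"
  defines "H \<equiv> lspan (insert u B)"
  shows "l2inner (T u) u \<in> op_spectrum H H (compress H T)"
proof (rule mem_op_spectrum_if_orth_range)
  have D_l2: "D \<subseteq> l2"
    using is_subspace_subset_l2[OF lin_op_subspace[OF T]] .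
  have fin: "finite (insert u B)" and uB_l2: "insert u B \<subseteq> l2"
    using B u D_l2 by auto
  have H_D: "H \<subseteq> D" and H_l2: "H \<subseteq> l2"
    unfolding H_def using lspan_subset_subspace[OF lin_op_subspace[OF T] fin] B u D_l2 by auto
  show "u \<in> H"
    unfolding H_def using fin by (simp add: generator_in_lspan)
  show "l2inner u u \<noteq> 0"
    using u(2) by simp
  show "\<forall>h\<in>H. l2inner (vdiff (compress H T h) (vscale (l2inner (T u) u) h)) u = 0"
  proof
    fix h assume h: "h \<in> H"
    then have Th: "T h \<in> l2"
      using H_D lin_op_in_l2[OF T] by auto
    have "compress H T h \<in> H"
      using is_orth_proj_oproj_lspan[OF fin uB_l2 Th] by (simp add: compress_def is_orth_proj_def H_def)
    then have l2: "compress H T h \<in> l2" "h \<in> l2" "u \<in> l2"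
      using h \<open>u \<in> H\<close> H_l2 by auto
    have "l2inner (compress H T h) u = l2inner (T h) u"
      unfolding compress_def H_def using fin uB_l2 Th \<open>u \<in> H\<close>
      by (intro l2inner_oproj_lspan) (simp_all add: H_def)
    also have "\<dots> = l2inner h u * l2inner (T u) u"
      using h unfolding H_def by (rule l2inner_lin_op_lspan_insert[OF T B u orth])
    finally show "l2inner (vdiff (compress H T h) (vscale (l2inner (T u) u) h)) u = 0"
      using l2 by (simp add: l2inner_vdiff_left l2inner_vscale_left)
  qed
qed

section \<open>Strong convergence of projections\<close>

definition unit_seq :: "nat \<Rightarrow> seq" where
  "unit_seq j = (\<lambda>n. if n = j then 1 else 0)"

lemma unit_seq_in_l2 [simp]: "unit_seq j \<in> l2"
proof -
  have "summable (\<lambda>n. (cmod (unit_seq j n))^2)"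
    by (rule summable_finite[of "{j}"]) (auto simp: unit_seq_def)
  then show ?thesis
    by (simp add: l2_def)
qed

lemma vsum_unit_seq: "vsum {..<N} y unit_seq = (\<lambda>n. if n < N then y n else 0)"
  by (auto simp: vsum_def unit_seq_def fun_eq_iff if_distrib[where f="\<lambda>t. _ * t"] cong: if_cong)

lemma l2_tail_small:
  assumes "y \<in> l2" "e > 0"
  shows "\<exists>N. l2norm (vdiff y (vsum {..<N} y unit_seq)) < e"
proof -
  let ?f = "\<lambda>n. (cmod (y n))^2"
  have f: "summable ?f"
    using assms by (simp add: l2_def)
  obtain N where N: "dist (\<Sum>n<N. ?f n) (suminf ?f) < e^2"
    using tendstoD[OF summable_LIMSEQ[OF f], of "e^2"] assms(2) by (auto simp: eventually_sequentially)
  have tail: "(\<lambda>n. if n \<in> {..<N} then 0 else ?f n) sums (suminf ?f - (\<Sum>n<N. ?f n))"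
    by (rule sums_If_finite_set'[OF summable_sums[OF f]]) (simp_all add: sum_negf)
  have "vdiff y (vsum {..<N} y unit_seq) = (\<lambda>n. if n \<in> {..<N} then 0 else y n)"
    by (simp add: vsum_unit_seq vdiff_def fun_eq_iff)
  then have "l2norm (vdiff y (vsum {..<N} y unit_seq)) = sqrt (suminf ?f - (\<Sum>n<N. ?f n))"
    using sums_unique[OF tail] by (simp add: l2norm_def if_distrib[of "\<lambda>t. (cmod t)^2"] cong: if_cong)
  also have "\<dots> < sqrt (e^2)"
    using N by (intro real_sqrt_less_mono) (auto simp: dist_real_def)
  finally show ?thesis
    using assms(2) by auto
qed

lemma vsum_unit_seq_approx:
  assumes "\<And>j. j < N \<Longrightarrow> hs j \<in> l2" "\<And>j. j < N \<Longrightarrow> l2norm (vdiff (hs j) (unit_seq j)) \<le> \<eta>"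
  shows "l2norm (vdiff (vsum {..<N} y unit_seq) (vsum {..<N} y hs)) \<le> \<eta> * (\<Sum>j<N. cmod (y j))"
proof -
  have "vdiff (vsum {..<N} y unit_seq) (vsum {..<N} y hs) = vsum {..<N} y (\<lambda>j. vdiff (unit_seq j) (hs j))"
    by (simp add: vsum_def vdiff_def fun_eq_iff sum_subtractf right_diff_distrib)
  then have "l2norm (vdiff (vsum {..<N} y unit_seq) (vsum {..<N} y hs))
      \<le> (\<Sum>j<N. cmod (y j) * l2norm (vdiff (unit_seq j) (hs j)))"
    using assms(1) by (simp add: l2norm_vsum_le image_subset_iff)
  also have "\<dots> \<le> (\<Sum>j<N. cmod (y j) * \<eta>)"
    using assms by (intro sum_mono mult_left_mono) (auto simp: l2norm_vdiff_commute)
  finally show ?thesis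
    by (simp add: sum_distrib_left mult.commute)
qed

lemma strong_to_id_oproj_lspan:
  assumes B: "\<And>k. finite (B k)" "\<And>k. B k \<subseteq> l2"
    and approx: "\<And>j e. e > 0 \<Longrightarrow>
      \<forall>\<^sub>F k in sequentially. \<exists>h\<in>lspan (B k). l2norm (vdiff h (unit_seq j)) < e"
  shows "strong_to_id (\<lambda>k. oproj (lspan (B k)))"
  unfolding strong_to_id_def
proof (intro ballI tendstoI)
  fix y :: seq and r :: real
  assume y: "y \<in> l2" and r: "0 < r"
  obtain N where N: "l2norm (vdiff y (vsum {..<N} y unit_seq)) < r / 2"
    using l2_tail_small[OF y, of "r / 2"] r by auto
  define S where "S = (\<Sum>j<N. cmod (y j))"
  define \<eta> where "\<eta> = r / (2 * (S + 1))"
  have S: "0 \<le> S"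
    by (simp add: S_def sum_nonneg)
  have \<eta>: "\<eta> > 0" "\<eta> * S < r / 2"
    using r S by (simp_all add: \<eta>_def field_simps)
  have "\<forall>\<^sub>F k in sequentially. \<forall>j\<in>{..<N}. \<exists>h\<in>lspan (B k). l2norm (vdiff h (unit_seq j)) < \<eta>"
    using approx \<eta>(1) by (intro eventually_ball_finite) auto
  then show "\<forall>\<^sub>F k in sequentially. dist (l2norm (vdiff (oproj (lspan (B k)) y) y)) 0 < r"
  proof (rule eventually_mono)
    fix k
    assume "\<forall>j\<in>{..<N}. \<exists>h\<in>lspan (B k). l2norm (vdiff h (unit_seq j)) < \<eta>"
    then obtain hs where hs: "\<And>j. j < N \<Longrightarrow> hs j \<in> lspan (B k)"
      "\<And>j. j < N \<Longrightarrow> l2norm (vdiff (hs j) (unit_seq j)) < \<eta>"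
      by (metis lessThan_iff)
    have V: "is_subspace (lspan (B k))"
      using B by (rule is_subspace_lspan)
    have hs_l2: "hs j \<in> l2" if "j < N" for j
      using hs(1)[OF that] is_subspace_subset_l2[OF V] by auto
    define h where "h = vsum {..<N} y hs"
    have h: "h \<in> lspan (B k)" "h \<in> l2"
      unfolding h_def using V hs(1) hs_l2 by (auto intro: vsum_in_subspace vsum_in_l2)
    have "l2norm (vdiff (vsum {..<N} y unit_seq) h) \<le> \<eta> * S"
      unfolding h_def S_def using hs_l2 hs(2) by (intro vsum_unit_seq_approx) (auto intro: less_imp_le)
    then have "l2norm (vdiff y h) < r"
      using l2norm_vdiff_triangle[OF y _ h(2), of "vsum {..<N} y unit_seq"] N \<eta>(2)
      by (simp add: vsum_in_l2 image_subset_iff)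
    moreover have "l2norm (vdiff y (oproj (lspan (B k)) y)) \<le> l2norm (vdiff y h)"
      using V y is_orth_proj_oproj_lspan[OF B y] h(1) by (rule is_orth_proj_best_approx)
    moreover have "oproj (lspan (B k)) y \<in> l2"
      using is_orth_proj_oproj_lspan[OF B y] is_subspace_subset_l2[OF V] by (auto simp: is_orth_proj_def)
    ultimately show "dist (l2norm (vdiff (oproj (lspan (B k)) y) y)) 0 < r"
      using y by (simp add: l2norm_vdiff_commute l2norm_nonneg)
  qed
qed

section \<open>Spectral points of compressions near the essential numerical range\<close>

lemma tendsto_mult_zero_bounded:
  fixes f g :: "'a \<Rightarrow> 'b::real_normed_algebra"
  assumes "(f \<longlongrightarrow> 0) F" "\<forall>\<^sub>F x in F. norm (g x) \<le> K"
  shows "((\<lambda>x. f x * g x) \<longlongrightarrow> 0) F"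
proof (rule tendsto_0_le[OF assms(1)])
  show "\<forall>\<^sub>F x in F. norm (f x * g x) \<le> norm (f x) * K"
    using assms(2) by eventually_elim (meson norm_ge_zero norm_mult_ineq mult_left_mono order_trans)
qed

lemma weak_conv_vzero_iff: "weak_conv v vzero \<longleftrightarrow> (\<forall>g\<in>l2. (\<lambda>n. l2inner (v n) g) \<longlonglongrightarrow> 0)"
  by (simp add: weak_conv_def)

lemma weak_conv_vzero_right:
  assumes "weak_conv v vzero" "\<And>n. v n \<in> l2" "g \<in> l2"
  shows "(\<lambda>n. l2inner g (v n)) \<longlonglongrightarrow> 0"
proof -
  have "(\<lambda>n. cnj (l2inner (v n) g)) \<longlonglongrightarrow> cnj 0"
    using assms by (intro tendsto_cnj) (simp add: weak_conv_vzero_iff)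
  then show ?thesis
    using assms by (simp add: l2inner_commute[of "v _" g])
qed

lemma l2inner_vdiff_vscale:
  assumes "a \<in> l2" "b \<in> l2" "a' \<in> l2" "b' \<in> l2"
  shows "l2inner (vdiff a (vscale c b)) (vdiff a' (vscale c' b')) =
    l2inner a a' - cnj c' * l2inner a b' - c * l2inner b a' + c * cnj c' * l2inner b b'"
  using assms by (simp add: l2inner_linear algebra_simps)

lemma norm_diff_diff_add_le:
  fixes a b c d :: "'a::real_normed_vector"
  shows "norm (a - b - c + d) \<le> norm a + norm b + norm c + norm d"
  using norm_triangle_ineq[of "a - b - c" d] norm_triangle_ineq4[of "a - b" c] norm_triangle_ineq4[of a b]
  by linarith

lemma l2inner_lin_op_vdiff_vscale:
  assumes T: "lin_op D T" and "a \<in> D" "b \<in> D" "a' \<in> l2" "b' \<in> l2"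
  shows "l2inner (T (vdiff a (vscale c b))) (vdiff a' (vscale c' b')) =
    l2inner (T a) a' - cnj c' * l2inner (T a) b' - c * l2inner (T b) a' + c * cnj c' * l2inner (T b) b'"
  using assms
  by (simp add: lin_op_vdiff lin_op_vscale is_subspace_vscale lin_op_subspace lin_op_in_l2 l2inner_vdiff_vscale)

definition cross_bounded :: "(seq \<Rightarrow> seq) \<Rightarrow> (nat \<Rightarrow> seq) \<Rightarrow> bool" where
  "cross_bounded T v \<longleftrightarrow>
     (\<exists>K. \<forall>\<^sub>F m in sequentially. \<forall>\<^sub>F n in sequentially. cmod (l2inner (T (v n)) (v m)) \<le> K)"

definition tame_seq :: "seq set \<Rightarrow> (seq \<Rightarrow> seq) \<Rightarrow> complex \<Rightarrow> (nat \<Rightarrow> seq) \<Rightarrow> bool" where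
  "tame_seq D T z v \<longleftrightarrow> (\<forall>n. v n \<in> D) \<and> weak_conv v vzero \<and>
     (\<lambda>n. l2inner (v n) (v n)) \<longlonglongrightarrow> 1 \<and> (\<lambda>n. l2inner (T (v n)) (v n)) \<longlonglongrightarrow> z \<and>
     cross_bounded T v"

lemma cross_bounded_perturb:
  assumes T: "lin_op D T" and v: "\<And>n. v n \<in> D" "weak_conv v vzero" "cross_bounded T v"
    and y: "y \<in> D" and c: "c \<longlonglongrightarrow> 0"
    and bounded: "\<forall>\<^sub>F n in sequentially. cmod (l2inner (T (v n)) y) \<le> K'"
  shows "cross_bounded T (\<lambda>n. vdiff (v n) (vscale (c n) y))"
proof -
  have D_l2: "D \<subseteq> l2"
    using is_subspace_subset_l2[OF lin_op_subspace[OF T]] .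
  have l2: "\<And>n. v n \<in> l2" "y \<in> l2" "T y \<in> l2"
    using v(1) y D_l2 lin_op_in_l2[OF T] by auto
  obtain K where K: "\<forall>\<^sub>F m in sequentially. \<forall>\<^sub>F n in sequentially. cmod (l2inner (T (v n)) (v m)) \<le> K"
    using v(3) by (auto simp: cross_bounded_def)
  have c1: "\<forall>\<^sub>F n in sequentially. cmod (c n) \<le> 1"
    using tendstoD[OF c, of 1] by (auto elim: eventually_mono simp: dist_norm)
  have Ty1: "\<forall>\<^sub>F m in sequentially. cmod (l2inner (T y) (v m)) \<le> 1"
    using tendstoD[OF weak_conv_vzero_right[OF v(2) l2(1,3)], of 1]
    by (auto elim: eventually_mono simp: dist_norm)
  have "\<forall>\<^sub>F m in sequentially. \<forall>\<^sub>F n in sequentially.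
      cmod (l2inner (T (vdiff (v n) (vscale (c n) y))) (vdiff (v m) (vscale (c m) y)))
        \<le> K + K' + 1 + cmod (l2inner (T y) y)"
    using K c1 Ty1
  proof eventually_elim
    case (elim m)
    from elim(1) c1 bounded show ?case
    proof eventually_elim
      case (elim n)
      have "cmod (cnj (c m) * l2inner (T (v n)) y) \<le> 1 * K'"
        unfolding norm_mult complex_mod_cnj using elim \<open>cmod (c m) \<le> 1\<close> by (intro mult_mono) auto
      moreover have "cmod (c n * l2inner (T y) (v m)) \<le> 1 * 1"
        unfolding norm_mult using elim \<open>cmod (l2inner (T y) (v m)) \<le> 1\<close> by (intro mult_mono) auto
      moreover have "cmod (c n * cnj (c m) * l2inner (T y) y) \<le> 1 * 1 * cmod (l2inner (T y) y)"
        unfolding norm_mult complex_mod_cnj using elim \<open>cmod (c m) \<le> 1\<close> by (intro mult_mono) auto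
      ultimately show ?case
        using elim(1) norm_diff_diff_add_le[of "l2inner (T (v n)) (v m)" "cnj (c m) * l2inner (T (v n)) y"
            "c n * l2inner (T y) (v m)" "c n * cnj (c m) * l2inner (T y) y"]
        by (simp add: l2inner_lin_op_vdiff_vscale[OF T v(1) y l2(1,2)])
    qed
  qed
  then show ?thesis
    by (auto simp: cross_bounded_def)
qed

lemma tame_seq_perturb:
  assumes T: "lin_op D T" and v: "tame_seq D T z v"
    and y: "y \<in> D" and c: "c \<longlonglongrightarrow> 0"
    and bounded: "\<forall>\<^sub>F n in sequentially. cmod (l2inner (T (v n)) y) \<le> K"
  shows "tame_seq D T z (\<lambda>n. vdiff (v n) (vscale (c n) y))"
proof -
  have vD: "\<And>n. v n \<in> D" and weak: "weak_conv v vzero"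
    and norm1: "(\<lambda>n. l2inner (v n) (v n)) \<longlonglongrightarrow> 1" and Tvv: "(\<lambda>n. l2inner (T (v n)) (v n)) \<longlonglongrightarrow> z"
    and cross: "cross_bounded T v"
    using v by (simp_all add: tame_seq_def)
  have D_l2: "D \<subseteq> l2"
    using is_subspace_subset_l2[OF lin_op_subspace[OF T]] .
  have l2: "\<And>n. v n \<in> l2" "y \<in> l2" "T y \<in> l2"
    using vD y D_l2 lin_op_in_l2[OF T] by auto
  have vy: "(\<lambda>n. l2inner (v n) y) \<longlonglongrightarrow> 0" and Tyv: "(\<lambda>n. l2inner (T y) (v n)) \<longlonglongrightarrow> 0"
    and yv: "(\<lambda>n. l2inner y (v n)) \<longlonglongrightarrow> 0"
    using weak l2 by (simp_all add: weak_conv_vzero_iff weak_conv_vzero_right)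
  have "(\<lambda>n. l2inner (v n) g - c n * l2inner y g) \<longlonglongrightarrow> 0 - 0 * l2inner y g" if "g \<in> l2" for g
    using weak that c by (intro tendsto_intros) (simp_all add: weak_conv_vzero_iff)
  then have "weak_conv (\<lambda>n. vdiff (v n) (vscale (c n) y)) vzero"
    using l2 by (simp add: weak_conv_vzero_iff l2inner_vdiff_left l2inner_vscale_left)
  moreover have "(\<lambda>n. l2inner (v n) (v n) - cnj (c n) * l2inner (v n) y - c n * l2inner y (v n)
      + c n * cnj (c n) * l2inner y y) \<longlonglongrightarrow> 1 - cnj 0 * 0 - 0 * 0 + 0 * cnj 0 * l2inner y y"
    by (intro tendsto_intros norm1 c vy yv)
  moreover have "(\<lambda>n. cnj (c n) * l2inner (T (v n)) y) \<longlonglongrightarrow> 0"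
    using tendsto_cnj[OF c] bounded by (intro tendsto_mult_zero_bounded) simp_all
  then have "(\<lambda>n. l2inner (T (v n)) (v n) - cnj (c n) * l2inner (T (v n)) y - c n * l2inner (T y) (v n)
      + c n * cnj (c n) * l2inner (T y) y) \<longlonglongrightarrow> z - 0 - 0 * 0 + 0 * cnj 0 * l2inner (T y) y"
    by (intro tendsto_intros Tvv c Tyv)
  moreover have "cross_bounded T (\<lambda>n. vdiff (v n) (vscale (c n) y))"
    using T vD weak cross y c bounded by (rule cross_bounded_perturb)
  moreover have "vdiff (v n) (vscale (c n) y) \<in> D" for n
    using lin_op_subspace[OF T] vD y by (intro is_subspace_vdiff is_subspace_vscale)
  ultimately show ?thesis
    using l2 by (simp add: tame_seq_def l2inner_vdiff_vscale l2inner_lin_op_vdiff_vscale[OF T vD y])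
qed

text \<open>Subtracting a vanishing multiple of a fixed member \<open>v m\<^sub>0\<close> with \<open>\<langle>v m\<^sub>0, g\<rangle> \<noteq> 0\<close>
  makes the whole sequence orthogonal to \<open>g\<close>; choosing \<open>m\<^sub>0\<close> late keeps the orthogonality
  already achieved and the cross terms bounded.\<close>

lemma tame_seq_orth_insert:
  assumes T: "lin_op D T" and v: "tame_seq D T z v" and g: "insert g G \<subseteq> l2"
    and orth: "\<forall>\<^sub>F n in sequentially. \<forall>g'\<in>G. l2inner (v n) g' = 0"
  shows "\<exists>w. tame_seq D T z w \<and> (\<forall>\<^sub>F n in sequentially. \<forall>g'\<in>insert g G. l2inner (w n) g' = 0)"
proof (cases "\<forall>\<^sub>F n in sequentially. l2inner (v n) g = 0")
  case True
  with v orth show ?thesis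
    by (auto elim: eventually_elim2)
next
  case False
  obtain K where K: "\<forall>\<^sub>F m in sequentially. \<forall>\<^sub>F n in sequentially. cmod (l2inner (T (v n)) (v m)) \<le> K"
    using v by (auto simp: tame_seq_def cross_bounded_def)
  have "\<exists>\<^sub>F m in sequentially. l2inner (v m) g \<noteq> 0"
    using False by (simp add: not_eventually)
  then have "\<exists>\<^sub>F m in sequentially. l2inner (v m) g \<noteq> 0 \<and>
      (\<forall>\<^sub>F n in sequentially. cmod (l2inner (T (v n)) (v m)) \<le> K) \<and> (\<forall>g'\<in>G. l2inner (v m) g' = 0)"
    using K orth by (rule frequently_eventually_frequently[OF _ eventually_conj])
  then obtain m0 where m0: "l2inner (v m0) g \<noteq> 0"
    "\<forall>\<^sub>F n in sequentially. cmod (l2inner (T (v n)) (v m0)) \<le> K" "\<forall>g'\<in>G. l2inner (v m0) g' = 0"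
    by (auto dest: frequently_ex)
  define c where "c n = l2inner (v n) g / l2inner (v m0) g" for n
  define w where "w n = vdiff (v n) (vscale (c n) (v m0))" for n
  have vD: "\<And>n. v n \<in> D" and v_l2: "\<And>n. v n \<in> l2"
    using v is_subspace_subset_l2[OF lin_op_subspace[OF T]] by (auto simp: tame_seq_def)
  have "c \<longlonglongrightarrow> 0"
    unfolding c_def using v g by (intro tendsto_divide_zero) (simp add: tame_seq_def weak_conv_vzero_iff)
  then have "tame_seq D T z w"
    unfolding w_def by (rule tame_seq_perturb[OF T v vD _ m0(2)])
  moreover have "\<forall>\<^sub>F n in sequentially. \<forall>g'\<in>insert g G. l2inner (w n) g' = 0"
    using orth
  proof eventually_elim
    case (elim n)
    have "l2inner (w n) g' = l2inner (v n) g' - c n * l2inner (v m0) g'" if "g' \<in> l2" for g'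
      using v_l2 that by (simp add: w_def l2inner_vdiff_left l2inner_vscale_left)
    then show ?case
      using elim m0(1,3) g by (auto simp: c_def)
  qed
  ultimately show ?thesis
    by blast
qed

lemma tame_seq_eventually_orth:
  assumes T: "lin_op D T" and v: "tame_seq D T z v" and G: "finite G" "G \<subseteq> l2"
  shows "\<exists>w. tame_seq D T z w \<and> (\<forall>\<^sub>F n in sequentially. \<forall>g\<in>G. l2inner (w n) g = 0)"
  using G
proof (induction G rule: finite_induct)
  case empty
  with v show ?case
    by auto
next
  case (insert g G)
  then obtain w where "tame_seq D T z w" "\<forall>\<^sub>F n in sequentially. \<forall>g'\<in>G. l2inner (w n) g' = 0"
    by auto
  with T insert.prems show ?case
    by (intro tame_seq_orth_insert)
qed

lemma unit_multiple_in_dom: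
  assumes T: "lin_op D T" and w: "w \<in> D" "l2inner w w \<noteq> 0"
  obtains u where "u \<in> D" "l2inner u u = 1" "l2inner (T u) u = l2inner (T w) w / l2inner w w"
    "\<And>g. g \<in> l2 \<Longrightarrow> l2inner w g = 0 \<Longrightarrow> l2inner g u = 0"
proof
  define r where "r = complex_of_real (1 / l2norm w)"
  have w_l2: "w \<in> l2" and Tw_l2: "T w \<in> l2"
    using w is_subspace_subset_l2[OF lin_op_subspace[OF T]] lin_op_in_l2[OF T] by auto
  have "l2inner w w = of_real ((l2norm w)^2)" and "l2norm w \<noteq> 0"
    using l2inner_self[OF w_l2] w(2) by auto
  moreover have cnj_r: "cnj r = r"
    by (simp add: r_def)
  ultimately have r: "r * (r * l2inner w w) = 1"
    by (simp add: r_def power2_eq_square)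
  show "vscale r w \<in> D"
    using T w by (simp add: is_subspace_vscale lin_op_subspace)
  show "l2inner (vscale r w) (vscale r w) = 1"
    using w_l2 r by (simp add: l2inner_vscale_left l2inner_vscale_right cnj_r)
  show "l2inner (T (vscale r w)) (vscale r w) = l2inner (T w) w / l2inner w w"
    using T w w_l2 Tw_l2 r
    by (simp add: lin_op_vscale l2inner_vscale_left l2inner_vscale_right cnj_r field_simps)
  show "l2inner g (vscale r w) = 0" if "g \<in> l2" "l2inner w g = 0" for g
    using that w_l2 by (simp add: l2inner_vscale_right l2inner_commute[of w g])
qed

text \<open>A witness yields the spectral point \<open>\<langle>T u, u\<rangle>\<close> of the compression to
  \<open>lspan (insert u B)\<close> (lemma \<open>l2inner_mem_spectrum_compress\<close>), a space that nearly contains \<open>E\<close>.\<close>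

definition compression_witness ::
  "seq set \<Rightarrow> (seq \<Rightarrow> seq) \<Rightarrow> complex \<Rightarrow> seq set \<Rightarrow> real \<Rightarrow> bool" where
  "compression_witness D T z E \<epsilon> \<longleftrightarrow> (\<exists>B u. finite B \<and> B \<subseteq> D \<and> u \<in> D \<and> l2inner u u = 1 \<and>
     (\<forall>b\<in>B. l2inner b u = 0 \<and> l2inner (T b) u = 0) \<and>
     (\<forall>e\<in>E. \<exists>b\<in>B. l2norm (vdiff b e) \<le> \<epsilon>) \<and> cmod (l2inner (T u) u - z) \<le> \<epsilon>)"

lemma compression_witness_of_orth:
  assumes E: "finite E" "E \<subseteq> D" and \<epsilon>: "\<epsilon> \<ge> 0"
    and u: "u \<in> D" "l2inner u u = 1" "\<forall>e\<in>E. l2inner e u = 0 \<and> l2inner (T e) u = 0"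
    and near: "cmod (l2inner (T u) u - z) \<le> \<epsilon>"
  shows "compression_witness D T z E \<epsilon>"
proof -
  have "l2norm (vdiff e e) = 0" for e
    by (simp add: vdiff_def l2norm_def)
  with \<epsilon> have "\<forall>e\<in>E. \<exists>b\<in>E. l2norm (vdiff b e) \<le> \<epsilon>"
    by (metis order.refl)
  with E u near show ?thesis
    unfolding compression_witness_def by (intro exI[of _ E] exI[of _ u]) simp
qed

lemma compression_witness_tame_seq:
  assumes T: "lin_op D T" and v: "tame_seq D T z v"
    and E: "finite E" "E \<subseteq> D" and \<epsilon>: "\<epsilon> > 0"
  shows "compression_witness D T z E \<epsilon>"
proof -
  have D_l2: "D \<subseteq> l2"
    using is_subspace_subset_l2[OF lin_op_subspace[OF T]] .
  have G: "finite (E \<union> T ` E)" "E \<union> T ` E \<subseteq> l2"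
    using E D_l2 lin_op_in_l2[OF T] by auto
  obtain w where w: "tame_seq D T z w"
    and orth: "\<forall>\<^sub>F n in sequentially. \<forall>g\<in>E \<union> T ` E. l2inner (w n) g = 0"
    using tame_seq_eventually_orth[OF T v G] by blast
  have "(\<lambda>n. l2inner (T (w n)) (w n) / l2inner (w n) (w n)) \<longlonglongrightarrow> z / 1"
    using w by (intro tendsto_intros) (simp_all add: tame_seq_def)
  then have "\<forall>\<^sub>F n in sequentially. dist (l2inner (T (w n)) (w n) / l2inner (w n) (w n)) z < \<epsilon>"
    using \<epsilon> by (simp add: tendstoD)
  moreover have "\<forall>\<^sub>F n in sequentially. dist (l2inner (w n) (w n)) 1 < 1"
    using w by (intro tendstoD) (simp_all add: tame_seq_def)
  ultimately have "\<forall>\<^sub>F n in sequentially. dist (l2inner (T (w n)) (w n) / l2inner (w n) (w n)) z < \<epsilon> \<and>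
      l2inner (w n) (w n) \<noteq> 0 \<and> (\<forall>g\<in>E \<union> T ` E. l2inner (w n) g = 0)"
    using orth by eventually_elim auto
  then obtain n where n: "dist (l2inner (T (w n)) (w n) / l2inner (w n) (w n)) z < \<epsilon>"
    "l2inner (w n) (w n) \<noteq> 0" "\<forall>g\<in>E \<union> T ` E. l2inner (w n) g = 0"
    using eventually_happens'[OF sequentially_bot] by blast
  have "w n \<in> D"
    using w by (simp add: tame_seq_def)
  then obtain u where u: "u \<in> D" "l2inner u u = 1"
    "l2inner (T u) u = l2inner (T (w n)) (w n) / l2inner (w n) (w n)"
    "\<And>g. g \<in> l2 \<Longrightarrow> l2inner (w n) g = 0 \<Longrightarrow> l2inner g u = 0"
    using unit_multiple_in_dom[OF T _ n(2)] by metis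
  have "\<forall>e\<in>E. l2inner e u = 0 \<and> l2inner (T e) u = 0"
  proof
    fix e assume "e \<in> E"
    then have "e \<in> l2" "T e \<in> l2" "l2inner (w n) e = 0" "l2inner (w n) (T e) = 0"
      using n(3) E(2) D_l2 lin_op_in_l2[OF T] by auto
    then show "l2inner e u = 0 \<and> l2inner (T e) u = 0"
      by (simp add: u(4))
  qed
  moreover have "cmod (l2inner (T u) u - z) \<le> \<epsilon>"
    using n(1) u(3) by (simp add: dist_norm)
  ultimately show ?thesis
    using E \<epsilon> u(1,2) by (intro compression_witness_of_orth) simp_all
qed

lemma cramer_rule_2:
  fixes p q \<mu> \<beta> s :: complex
  assumes "\<beta> - \<mu> * s \<noteq> 0"
  defines "a \<equiv> (- p * \<beta> + q * s) / (\<beta> - \<mu> * s)" and "b \<equiv> (- q + \<mu> * p) / (\<beta> - \<mu> * s)"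
  shows "p + a + b * s = 0" "q + a * \<mu> + b * \<beta> = 0"
    and "cmod a * cmod (\<beta> - \<mu> * s) \<le> cmod p * cmod \<beta> + cmod q * cmod s"
    and "cmod b * cmod (\<beta> - \<mu> * s) \<le> cmod q + cmod \<mu> * cmod p"
  using assms norm_triangle_ineq[of "- p * \<beta>" "q * s"] norm_triangle_ineq[of "- q" "\<mu> * p"]
  by (simp_all add: a_def b_def field_simps norm_divide norm_mult)

text \<open>Cramer's rule for the two linear conditions \<open>\<langle>f, u\<rangle> = 0\<close> and \<open>\<langle>T f, u\<rangle> = 0\<close>
  on \<open>f = e + a u + b y\<close>; the determinant is \<open>\<langle>T y, u\<rangle> - \<langle>T u, u\<rangle> \<langle>y, u\<rangle>\<close>.\<close>

lemma perp_correction: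
  assumes T: "lin_op D T" and in_D: "u \<in> D" "y \<in> D" "e \<in> D"
    and u: "l2inner u u = 1" and y: "l2norm y = 1"
    and det: "l2inner (T y) u - l2inner (T u) u * l2inner y u \<noteq> 0"
  obtains f where "f \<in> D" "l2inner f u = 0" "l2inner (T f) u = 0"
    "l2norm (vdiff f e) * cmod (l2inner (T y) u - l2inner (T u) u * l2inner y u)
       \<le> cmod (l2inner e u) * (cmod (l2inner (T y) u) + cmod (l2inner (T u) u))
         + cmod (l2inner (T e) u) * (cmod (l2inner y u) + 1)"
proof -
  define \<mu> \<beta> s p q where "\<mu> = l2inner (T u) u" and "\<beta> = l2inner (T y) u" and "s = l2inner y u"
    and "p = l2inner e u" and "q = l2inner (T e) u"
  define a b where "a = (- p * \<beta> + q * s) / (\<beta> - \<mu> * s)" and "b = (- q + \<mu> * p) / (\<beta> - \<mu> * s)"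
  define f where "f = vadd e (vadd (vscale a u) (vscale b y))"
  note cramer = cramer_rule_2[where p = p and q = q and \<mu> = \<mu> and \<beta> = \<beta> and s = s, folded a_def b_def]
  have \<Delta>: "\<beta> - \<mu> * s \<noteq> 0"
    using det by (simp add: \<mu>_def \<beta>_def s_def)
  have D_l2: "D \<subseteq> l2"
    using is_subspace_subset_l2[OF lin_op_subspace[OF T]] .
  have l2: "u \<in> l2" "y \<in> l2" "e \<in> l2" "T u \<in> l2" "T y \<in> l2" "T e \<in> l2"
    using in_D D_l2 lin_op_in_l2[OF T] by auto
  have S: "is_subspace D"
    using T by (rule lin_op_subspace)
  have "T f = vadd (T e) (vadd (vscale a (T u)) (vscale b (T y)))"
    using T S in_D by (simp add: f_def lin_op_vadd lin_op_vscale is_subspace_vadd is_subspace_vscale)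
  then have Tf: "l2inner (T f) u = 0"
    using l2 cramer(2)[OF \<Delta>] by (simp add: l2inner_vadd_left l2inner_vscale_left q_def \<mu>_def \<beta>_def add.assoc)
  have f: "l2inner f u = 0"
    using l2 u cramer(1)[OF \<Delta>] by (simp add: f_def l2inner_vadd_left l2inner_vscale_left p_def s_def add.assoc)
  have "l2norm u = 1"
    using u l2(1) by (simp add: l2norm_eq_1_iff)
  moreover have "vdiff f e = vadd (vscale a u) (vscale b y)"
    by (simp add: f_def vdiff_def vadd_def vscale_def)
  ultimately have "l2norm (vdiff f e) \<le> cmod a + cmod b"
    using l2norm_triangle[of "vscale a u" "vscale b y"] l2 y by (simp add: l2norm_vscale)
  then have "l2norm (vdiff f e) * cmod (\<beta> - \<mu> * s) \<le> cmod a * cmod (\<beta> - \<mu> * s) + cmod b * cmod (\<beta> - \<mu> * s)"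
    by (simp add: mult_right_mono flip: distrib_right)
  also have "\<dots> \<le> cmod p * (cmod \<beta> + cmod \<mu>) + cmod q * (cmod s + 1)"
    using cramer(3,4)[OF \<Delta>] by (simp add: algebra_simps)
  finally have "l2norm (vdiff f e) * cmod (\<beta> - \<mu> * s) \<le> cmod p * (cmod \<beta> + cmod \<mu>) + cmod q * (cmod s + 1)" .
  moreover have "f \<in> D"
    unfolding f_def using S in_D by (intro is_subspace_vadd is_subspace_vscale)
  ultimately show ?thesis
    using that f Tf unfolding \<mu>_def \<beta>_def s_def p_def q_def by blast
qed

lemma perp_correction_small:
  assumes T: "lin_op D T" and in_D: "u \<in> D" "y \<in> D" "e \<in> D"
    and u: "l2inner u u = 1" and y: "l2norm y = 1" and Z: "1 \<le> Z" "cmod (l2inner (T u) u) \<le> Z"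
    and large: "1 < cmod (l2inner (T y) u)" and small: "cmod (l2inner y u) < 1 / (2 * Z)"
    and e: "cmod (l2inner e u) \<le> \<eta>" "cmod (l2inner (T e) u) \<le> \<eta>"
  obtains f where "f \<in> D" "l2inner f u = 0" "l2inner (T f) u = 0" "l2norm (vdiff f e) \<le> (2 * Z + 6) * \<eta>"
proof -
  define \<mu> \<beta> s where "\<mu> = l2inner (T u) u" and "\<beta> = l2inner (T y) u" and "s = l2inner y u"
  have "cmod (\<mu> * s) \<le> Z * (1 / (2 * Z))"
    unfolding norm_mult s_def \<mu>_def using Z small by (intro mult_mono) auto
  then have "cmod (\<mu> * s) \<le> 1 / 2"
    using Z by simp
  then have det: "cmod \<beta> \<le> 2 * cmod (\<beta> - \<mu> * s)" "1 \<le> 2 * cmod (\<beta> - \<mu> * s)"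
    using norm_triangle_ineq2[of \<beta> "\<mu> * s"] large by (simp_all add: \<beta>_def)
  have "1 / (2 * Z) \<le> 1"
    using Z by (simp add: field_simps)
  then have s1: "cmod s \<le> 1"
    using small by (simp add: s_def)
  have \<eta>: "0 \<le> \<eta>"
    using e(1) norm_ge_zero order_trans by blast
  obtain f where f: "f \<in> D" "l2inner f u = 0" "l2inner (T f) u = 0"
    "l2norm (vdiff f e) * cmod (\<beta> - \<mu> * s)
       \<le> cmod (l2inner e u) * (cmod \<beta> + cmod \<mu>) + cmod (l2inner (T e) u) * (cmod s + 1)"
    using perp_correction[OF T in_D u y] det(2) unfolding \<beta>_def \<mu>_def s_def by force
  note f(4)
  also have "cmod (l2inner e u) * (cmod \<beta> + cmod \<mu>) + cmod (l2inner (T e) u) * (cmod s + 1)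
      \<le> \<eta> * (cmod \<beta> + Z) + \<eta> * 2"
    using e Z s1 \<eta> by (intro add_mono mult_mono) (auto simp: \<mu>_def)
  also have "\<dots> \<le> ((2 * Z + 6) * \<eta>) * cmod (\<beta> - \<mu> * s)"
  proof -
    have "Z \<le> Z * (2 * cmod (\<beta> - \<mu> * s))"
      using mult_left_mono[OF det(2), of Z] Z by simp
    then have "cmod \<beta> + Z + 2 \<le> (2 * Z + 6) * cmod (\<beta> - \<mu> * s)"
      using det by (simp add: algebra_simps)
    then show ?thesis
      using \<eta> mult_left_mono by (fastforce simp: algebra_simps)
  qed
  finally have "l2norm (vdiff f e) \<le> (2 * Z + 6) * \<eta>"
    by (rule mult_right_le_imp_le) (use det(2) in linarith)
  with f(1-3) show ?thesis
    by (rule that)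
qed

lemma large_cross_pair:
  assumes T: "lin_op D T" and x: "\<And>n. x n \<in> l2" "weak_conv x vzero"
    and Txx: "(\<lambda>n. l2inner (T (x n)) (x n)) \<longlonglongrightarrow> z"
    and large: "\<exists>\<^sub>F m in sequentially. \<exists>\<^sub>F n in sequentially. 1 < cmod (l2inner (T (x n)) (x m))"
    and E: "finite E" "E \<subseteq> D" and pos: "\<eta> > 0" "\<delta> > 0" "\<rho> > 0"
  obtains m n where "\<forall>e\<in>E. cmod (l2inner e (x m)) < \<eta> \<and> cmod (l2inner (T e) (x m)) < \<eta>"
    "cmod (l2inner (T (x m)) (x m) - z) < \<delta>"
    "1 < cmod (l2inner (T (x n)) (x m))" "cmod (l2inner (x n) (x m)) < \<rho>"
proof -
  have D_l2: "D \<subseteq> l2"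
    using is_subspace_subset_l2[OF lin_op_subspace[OF T]] .
  have small: "(\<lambda>m. l2inner g (x m)) \<longlonglongrightarrow> 0" if "g \<in> l2" for g
    using x(2,1) that by (rule weak_conv_vzero_right)
  have "\<forall>\<^sub>F m in sequentially. (\<forall>e\<in>E. cmod (l2inner e (x m)) < \<eta> \<and> cmod (l2inner (T e) (x m)) < \<eta>)
      \<and> cmod (l2inner (T (x m)) (x m) - z) < \<delta>"
    using pos E D_l2 lin_op_in_l2[OF T]
    by (intro eventually_conj eventually_ball_finite ballI tendstoD[OF Txx, simplified dist_norm]
        tendstoD[OF small, simplified dist_norm, simplified]) auto
  with large have "\<exists>\<^sub>F m in sequentially. (\<exists>\<^sub>F n in sequentially. 1 < cmod (l2inner (T (x n)) (x m))) \<and>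
      (\<forall>e\<in>E. cmod (l2inner e (x m)) < \<eta> \<and> cmod (l2inner (T e) (x m)) < \<eta>)
      \<and> cmod (l2inner (T (x m)) (x m) - z) < \<delta>"
    by (rule frequently_eventually_frequently)
  then obtain m where m: "\<exists>\<^sub>F n in sequentially. 1 < cmod (l2inner (T (x n)) (x m))"
    "\<forall>e\<in>E. cmod (l2inner e (x m)) < \<eta> \<and> cmod (l2inner (T e) (x m)) < \<eta>"
    "cmod (l2inner (T (x m)) (x m) - z) < \<delta>"
    by (auto dest: frequently_ex)
  have "(\<lambda>n. l2inner (x n) (x m)) \<longlonglongrightarrow> 0"
    using x by (simp add: weak_conv_vzero_iff)
  from tendstoD[OF this pos(3)]
  have "\<forall>\<^sub>F n in sequentially. cmod (l2inner (x n) (x m)) < \<rho>"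
    by (simp add: dist_norm)
  with m(1) have "\<exists>\<^sub>F n in sequentially. 1 < cmod (l2inner (T (x n)) (x m)) \<and> cmod (l2inner (x n) (x m)) < \<rho>"
    by (rule frequently_eventually_frequently)
  then obtain n where "1 < cmod (l2inner (T (x n)) (x m))" "cmod (l2inner (x n) (x m)) < \<rho>"
    by (auto dest: frequently_ex)
  with m(2,3) show ?thesis
    by (rule that)
qed

lemma compression_witness_large_cross:
  assumes T: "lin_op D T" and x: "\<forall>n. x n \<in> D \<and> l2norm (x n) = 1" "weak_conv x vzero"
    and Txx: "(\<lambda>n. l2inner (T (x n)) (x n)) \<longlonglongrightarrow> z"
    and large: "\<exists>\<^sub>F m in sequentially. \<exists>\<^sub>F n in sequentially. 1 < cmod (l2inner (T (x n)) (x m))"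
    and E: "finite E" "E \<subseteq> D" and \<epsilon>: "\<epsilon> > 0"
  shows "compression_witness D T z E \<epsilon>"
proof -
  have xD: "\<And>n. x n \<in> D" and x_l2: "\<And>n. x n \<in> l2"
    using x(1) is_subspace_subset_l2[OF lin_op_subspace[OF T]] by auto
  have xx: "\<And>n. l2inner (x n) (x n) = 1"
    using x(1) x_l2 by (simp add: flip: l2norm_eq_1_iff)
  define Z where "Z = cmod z + 1"
  have Z: "1 \<le> Z"
    by (simp add: Z_def)
  obtain m n where m: "\<forall>e\<in>E. cmod (l2inner e (x m)) < \<epsilon> / (2 * Z + 6) \<and>
        cmod (l2inner (T e) (x m)) < \<epsilon> / (2 * Z + 6)"
      "cmod (l2inner (T (x m)) (x m) - z) < min \<epsilon> 1"
    and n: "1 < cmod (l2inner (T (x n)) (x m))" "cmod (l2inner (x n) (x m)) < 1 / (2 * Z)"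
    using large_cross_pair[OF T x_l2 x(2) Txx large E, of "\<epsilon> / (2 * Z + 6)" "min \<epsilon> 1" "1 / (2 * Z)"] \<epsilon> Z
    by auto
  have \<mu>: "cmod (l2inner (T (x m)) (x m)) \<le> Z"
    using m(2) norm_triangle_ineq2[of "l2inner (T (x m)) (x m)" z] by (simp add: Z_def)
  have "\<forall>e\<in>E. \<exists>f. f \<in> D \<and> l2inner f (x m) = 0 \<and> l2inner (T f) (x m) = 0 \<and> l2norm (vdiff f e) \<le> \<epsilon>"
  proof
    fix e assume "e \<in> E"
    then obtain f where "f \<in> D" "l2inner f (x m) = 0" "l2inner (T f) (x m) = 0"
      "l2norm (vdiff f e) \<le> (2 * Z + 6) * (\<epsilon> / (2 * Z + 6))"
      using perp_correction_small[OF T xD xD _ xx _ Z \<mu> n] E(2) x(1) m(1) less_imp_le by blast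
    with Z show "\<exists>f. f \<in> D \<and> l2inner f (x m) = 0 \<and> l2inner (T f) (x m) = 0 \<and> l2norm (vdiff f e) \<le> \<epsilon>"
      by auto
  qed
  then obtain F where F: "\<forall>e\<in>E. F e \<in> D \<and> l2inner (F e) (x m) = 0 \<and>
      l2inner (T (F e)) (x m) = 0 \<and> l2norm (vdiff (F e) e) \<le> \<epsilon>"
    by metis
  show ?thesis
    unfolding compression_witness_def
    using E F xD xx m(2) by (intro exI[of _ "F ` E"] exI[of _ "x m"]) auto
qed

lemma compression_witness_ess_num_range:
  assumes T: "lin_op D T" and z: "z \<in> ess_num_range D T"
    and E: "finite E" "E \<subseteq> D" and \<epsilon>: "\<epsilon> > 0"
  shows "compression_witness D T z E \<epsilon>"
proof -
  obtain x where x: "\<forall>n. x n \<in> D \<and> l2norm (x n) = 1" "weak_conv x vzero"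
    and Txx: "(\<lambda>n. l2inner (T (x n)) (x n)) \<longlonglongrightarrow> z"
    using z by (auto simp: ess_num_range_def)
  show ?thesis
  proof (cases "cross_bounded T x")
    case True
    have "l2inner (x n) (x n) = 1" for n
      using x(1) is_subspace_subset_l2[OF lin_op_subspace[OF T]] l2norm_eq_1_iff[of "x n"] by auto
    with x Txx True have "tame_seq D T z x"
      by (simp add: tame_seq_def)
    then show ?thesis
      using T E \<epsilon> by (intro compression_witness_tame_seq)
  next
    case False
    then have "\<exists>\<^sub>F m in sequentially. \<exists>\<^sub>F n in sequentially. 1 < cmod (l2inner (T (x n)) (x m))"
      by (auto simp: cross_bounded_def not_eventually not_le)
    with T x Txx E \<epsilon> show ?thesis
      by (intro compression_witness_large_cross)
  qed
qed

lemma spectrum_compress_near_ess_num_range: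
  assumes T: "lin_op D T" and z: "z \<in> ess_num_range D T"
    and E: "finite E" "E \<subseteq> D" and \<epsilon>: "\<epsilon> > 0"
  obtains B \<mu> where "finite B" "B \<subseteq> D" "\<forall>e\<in>E. \<exists>h\<in>lspan B. l2norm (vdiff h e) \<le> \<epsilon>"
    "\<mu> \<in> op_spectrum (lspan B) (lspan B) (compress (lspan B) T)" "cmod (\<mu> - z) \<le> \<epsilon>"
proof -
  obtain B u where B: "finite B" "B \<subseteq> D" and u: "u \<in> D" "l2inner u u = 1"
    and orth: "\<forall>b\<in>B. l2inner b u = 0 \<and> l2inner (T b) u = 0"
    and approx: "\<forall>e\<in>E. \<exists>b\<in>B. l2norm (vdiff b e) \<le> \<epsilon>"
    and near: "cmod (l2inner (T u) u - z) \<le> \<epsilon>"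
    using compression_witness_ess_num_range[OF assms] by (auto simp: compression_witness_def)
  have "\<forall>e\<in>E. \<exists>h\<in>lspan (insert u B). l2norm (vdiff h e) \<le> \<epsilon>"
    using approx B(1) by (meson finite_insert generator_in_lspan insertCI)
  moreover have "l2inner (T u) u \<in> op_spectrum (lspan (insert u B)) (lspan (insert u B))
      (compress (lspan (insert u B)) T)"
    using T B u orth by (rule l2inner_mem_spectrum_compress)
  ultimately show ?thesis
    using that[of "insert u B"] B u near by blast
qed

lemma spectrum_compress_near_unit_seqs:
  assumes T: "lin_op D T" and dense: "dense_in_l2 D" and z: "z \<in> ess_num_range D T" and \<epsilon>: "\<epsilon> > 0"
  obtains B \<mu> where "finite B" "B \<subseteq> D" "\<forall>j<N. \<exists>h\<in>lspan B. l2norm (vdiff h (unit_seq j)) < \<epsilon>"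
    "\<mu> \<in> op_spectrum (lspan B) (lspan B) (compress (lspan B) T)" "cmod (\<mu> - z) < \<epsilon>"
proof -
  have D_l2: "D \<subseteq> l2"
    using is_subspace_subset_l2[OF lin_op_subspace[OF T]] .
  have half: "\<epsilon> / 2 > 0"
    using \<epsilon> by simp
  then have "\<forall>j. \<exists>d\<in>D. l2norm (vdiff (unit_seq j) d) < \<epsilon> / 2"
    using dense unit_seq_in_l2 unfolding dense_in_l2_def by blast
  then obtain d where d: "\<And>j. d j \<in> D" "\<And>j. l2norm (vdiff (unit_seq j) (d j)) < \<epsilon> / 2"
    by metis
  obtain B \<mu> where B: "finite B" "B \<subseteq> D"
    and approx: "\<forall>e\<in>d ` {..<N}. \<exists>h\<in>lspan B. l2norm (vdiff h e) \<le> \<epsilon> / 2"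
    and \<mu>: "\<mu> \<in> op_spectrum (lspan B) (lspan B) (compress (lspan B) T)" "cmod (\<mu> - z) \<le> \<epsilon> / 2"
    using spectrum_compress_near_ess_num_range[OF T z _ _ half, of "d ` {..<N}"] d(1) by blast
  have "\<forall>j<N. \<exists>h\<in>lspan B. l2norm (vdiff h (unit_seq j)) < \<epsilon>"
  proof (intro allI impI)
    fix j assume "j < N"
    then obtain h where h: "h \<in> lspan B" "l2norm (vdiff h (d j)) \<le> \<epsilon> / 2"
      using approx by auto
    have "h \<in> l2" "d j \<in> l2"
      using h(1) is_subspace_subset_l2[OF is_subspace_lspan[OF B(1)]] B(2) d(1) D_l2 by auto
    then have "l2norm (vdiff h (unit_seq j)) \<le> l2norm (vdiff h (d j)) + l2norm (vdiff (unit_seq j) (d j))"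
      using l2norm_vdiff_triangle[of h "d j" "unit_seq j"] l2norm_vdiff_commute[of "d j" "unit_seq j"] by simp
    also have "\<dots> < \<epsilon>"
      using h(2) d(2)[of j] by simp
    finally show "\<exists>h\<in>lspan B. l2norm (vdiff h (unit_seq j)) < \<epsilon>"
      using h(1) by blast
  qed
  moreover have "cmod (\<mu> - z) < \<epsilon>"
    using \<mu>(2) \<epsilon> by simp
  ultimately show ?thesis
    by (rule that[OF B _ \<mu>(1)])
qed

lemma finite_sections_ess_num_range:
  assumes T: "lin_op D T" and dense: "dense_in_l2 D" and z: "z \<in> ess_num_range D T"
  obtains B \<mu> where "\<And>k. finite (B k)" "\<And>k. B k \<subseteq> D"
    "\<And>j e. e > 0 \<Longrightarrow> \<forall>\<^sub>F k in sequentially. \<exists>h\<in>lspan (B k). l2norm (vdiff h (unit_seq j)) < e"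
    "\<And>k. \<mu> k \<in> op_spectrum (lspan (B k)) (lspan (B k)) (compress (lspan (B k)) T)" "\<mu> \<longlonglongrightarrow> z"
proof -
  have "\<exists>B \<mu>. finite B \<and> B \<subseteq> D \<and>
      (\<forall>j<k. \<exists>h\<in>lspan B. l2norm (vdiff h (unit_seq j)) < inverse (real (Suc k))) \<and>
      \<mu> \<in> op_spectrum (lspan B) (lspan B) (compress (lspan B) T) \<and> cmod (\<mu> - z) < inverse (real (Suc k))"
    for k
  proof -
    have "inverse (real (Suc k)) > 0"
      by simp
    then obtain B \<mu> where "finite B" "B \<subseteq> D"
      "\<forall>j<k. \<exists>h\<in>lspan B. l2norm (vdiff h (unit_seq j)) < inverse (real (Suc k))"
      "\<mu> \<in> op_spectrum (lspan B) (lspan B) (compress (lspan B) T)" "cmod (\<mu> - z) < inverse (real (Suc k))"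
      by (rule spectrum_compress_near_unit_seqs[OF T dense z])
    then show ?thesis
      by blast
  qed
  then obtain B \<mu> where B: "\<And>k. finite (B k)" "\<And>k. B k \<subseteq> D"
    and approx: "\<And>k j. j < k \<Longrightarrow> \<exists>h\<in>lspan (B k). l2norm (vdiff h (unit_seq j)) < inverse (real (Suc k))"
    and \<mu>: "\<And>k. \<mu> k \<in> op_spectrum (lspan (B k)) (lspan (B k)) (compress (lspan (B k)) T)"
      "\<And>k. cmod (\<mu> k - z) < inverse (real (Suc k))"
    by metis
  have "\<forall>\<^sub>F k in sequentially. \<exists>h\<in>lspan (B k). l2norm (vdiff h (unit_seq j)) < e" if "e > 0" for j e
    using eventually_gt_at_top[of j] tendstoD[OF LIMSEQ_inverse_real_of_nat that]
  proof eventually_elim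
    case (elim k)
    then show ?case
      using approx[of j k] by (force simp: dist_norm)
  qed
  moreover have "(\<lambda>k. \<mu> k - z) \<longlonglongrightarrow> 0"
    by (rule Lim_null_comparison[OF always_eventually LIMSEQ_inverse_real_of_nat]) (use \<mu>(2) in \<open>blast intro: less_imp_le\<close>)
  ultimately show ?thesis
    by (intro that[OF B _ \<mu>(1)]) (simp_all add: LIM_zero_iff)
qed

lemma tendsto_infdist_0:
  assumes "\<forall>\<^sub>F k in F. \<mu> k \<in> S k" "(\<mu> \<longlongrightarrow> z) F"
  shows "((\<lambda>k. infdist z (S k)) \<longlongrightarrow> 0) F"
proof (rule Lim_null_comparison)
  show "((\<lambda>k. dist (\<mu> k) z) \<longlongrightarrow> 0) F"
    using assms(2) by (rule tendsto_dist_iff[THEN iffD1])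
  show "\<forall>\<^sub>F k in F. norm (infdist z (S k)) \<le> dist (\<mu> k) z"
    using assms(1) by eventually_elim (simp add: infdist_nonneg infdist_le dist_commute)
qed

lemma spurious_eig_if_tendsto:
  assumes "z \<notin> op_spectrum l2 D T"
    and "\<And>n. \<mu> n \<in> op_spectrum (Hn n) (Hn n) (compress (Hn n) T)" "\<mu> \<longlonglongrightarrow> z"
  shows "spurious_eig D T Hn z"
proof -
  have "\<forall>e>0. \<exists>N. \<forall>n\<in>UNIV. N \<le> n \<longrightarrow> dist (\<mu> n) z < e"
    using assms(3) by (simp add: lim_sequentially)
  with assms(1,2) show ?thesis
    unfolding spurious_eig_def by blast
qed

theorem theorem6p3:
  fixes D :: "seq set" and T :: "seq \<Rightarrow> seq"
  assumes "lin_op D T" and "dense_in_l2 D"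
  shows "\<forall>z\<in>ess_num_range D T. \<exists>Hn :: nat \<Rightarrow> seq set.
     (\<forall>n. fin_dim_subspace (Hn n) \<and> Hn n \<subseteq> D) \<and>
     strong_to_id (\<lambda>n. oproj (Hn n)) \<and>
     (\<lambda>n. infdist z (op_spectrum (Hn n) (Hn n) (compress (Hn n) T))) \<longlonglongrightarrow> 0 \<and>
     (z \<notin> op_spectrum l2 D T \<longrightarrow> spurious_eig D T Hn z)"
proof
  fix z assume z: "z \<in> ess_num_range D T"
  obtain B \<mu> where B: "\<And>k. finite (B k)" "\<And>k. B k \<subseteq> D"
    and approx: "\<And>j e. e > 0 \<Longrightarrow> \<forall>\<^sub>F k in sequentially. \<exists>h\<in>lspan (B k). l2norm (vdiff h (unit_seq j)) < e"
    and \<mu>: "\<And>k. \<mu> k \<in> op_spectrum (lspan (B k)) (lspan (B k)) (compress (lspan (B k)) T)" "\<mu> \<longlonglongrightarrow> z"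
    using finite_sections_ess_num_range[OF assms z] by blast
  have B_l2: "\<And>k. B k \<subseteq> l2"
    using B(2) is_subspace_subset_l2[OF lin_op_subspace[OF assms(1)]] by blast
  have "fin_dim_subspace (lspan (B k)) \<and> lspan (B k) \<subseteq> D" for k
    using lspan_subset_subspace[OF lin_op_subspace[OF assms(1)] B(1,2)] B(1) B_l2
    unfolding fin_dim_subspace_def by (intro conjI exI[of _ "B k"]) simp_all
  moreover have "strong_to_id (\<lambda>k. oproj (lspan (B k)))"
    using B(1) B_l2 approx by (rule strong_to_id_oproj_lspan)
  moreover have "(\<lambda>k. infdist z (op_spectrum (lspan (B k)) (lspan (B k)) (compress (lspan (B k)) T))) \<longlonglongrightarrow> 0"
    using \<mu> by (intro tendsto_infdist_0 always_eventually allI)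
  moreover have "z \<notin> op_spectrum l2 D T \<longrightarrow> spurious_eig D T (\<lambda>k. lspan (B k)) z"
    using \<mu> by (blast intro: spurious_eig_if_tendsto)
  ultimately show "\<exists>Hn. (\<forall>n. fin_dim_subspace (Hn n) \<and> Hn n \<subseteq> D) \<and> strong_to_id (\<lambda>n. oproj (Hn n)) \<and>
      (\<lambda>n. infdist z (op_spectrum (Hn n) (Hn n) (compress (Hn n) T))) \<longlonglongrightarrow> 0 \<and>
      (z \<notin> op_spectrum l2 D T \<longrightarrow> spurious_eig D T Hn z)"
    by (intro exI[of _ "\<lambda>k. lspan (B k)"]) blast
qed

end
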